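(* Let $p$ be a prime and $n\ge1$. Let $D_n=\prod_{1\le h\le k\le n,\ \gcd(h,k)=1} k$ be the product of the denominators of all nonzero Farey fractions of order $n$ (each written in lowest terms). Then $$\mathrm{ord}_p(D_n)=\sum_{b=1}^{\lfloor\log_p n\rfloor}\ \sum_{a=1}^{\lfloor n/p^b\rfloor}\varphi(ap^b).$$
   Context: $\mathrm{ord}_p(m)$ is the exponent of the prime $p$ in the factorization of the positive integer $m$; $\varphi$ is Euler's totient function. *)

theory Defs
  imports Complex_Main "HOL-Number_Theory.Number_Theory"
begin

definition farey_denom_prod :: "nat \<Rightarrow> nat" where
  "farey_denom_prod n = (\<Prod>(h, k) \<in> {(h, k). 1 \<le> h \<and> h \<le> k \<and> k \<le> n \<and> gcd h k = 1}. k)"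

end

theory Submission
  imports Defs
begin

text \<open>Grouping the Farey fractions by denominator, each k occurs \<open>\<phi>(k)\<close> times, so
  \<open>ord\<^sub>p(D\<^sub>n) = \<Sum>\<^sub>k\<^sub>\<le>\<^sub>n \<phi>(k) ord\<^sub>p(k)\<close>. Writing \<open>ord\<^sub>p(k)\<close> as the number of
  \<open>b \<ge> 1\<close> with \<open>p\<^sup>b | k\<close> (all such b satisfy \<open>p\<^sup>b \<le> n\<close>) and swapping the two sums gives,
  for each b, the sum of \<open>\<phi>\<close> over the multiples \<open>a p\<^sup>b \<le> n\<close>.\<close>

lemma farey_pairs_eq_swap_Sigma_totatives:
  "{(h, k). 1 \<le> h \<and> h \<le> k \<and> k \<le> n \<and> gcd h k = 1} =
   prod.swap ` (SIGMA k:{1..n}. totatives k)"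
  unfolding totatives_def coprime_iff_gcd_eq_1 by (auto simp: image_iff)

lemma multiplicity_farey_denom_prod:
  fixes p :: nat
  assumes "prime p"
  shows "multiplicity p (farey_denom_prod n) = (\<Sum>k = 1..n. totient k * multiplicity p k)"
proof -
  have "farey_denom_prod n = (\<Prod>(k, h) \<in> (SIGMA k:{1..n}. totatives k). k)"
    unfolding farey_denom_prod_def farey_pairs_eq_swap_Sigma_totatives
    by (subst prod.reindex) (auto simp: case_prod_beta)
  also have "\<dots> = (\<Prod>k = 1..n. k ^ totient k)"
    by (subst prod.Sigma[symmetric]) (auto simp: totient_def)
  finally have "multiplicity p (farey_denom_prod n) = (\<Sum>k = 1..n. multiplicity p (k ^ totient k))"
    using assms by (simp only:) (rule prime_elem_multiplicity_prod_distrib; auto)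
  also have "\<dots> = (\<Sum>k = 1..n. totient k * multiplicity p k)"
    using assms by (intro sum.cong) (auto simp: prime_elem_multiplicity_power_distrib)
  finally show ?thesis .
qed

lemma multiplicity_le_nat_floor_log:
  fixes p k n :: nat
  assumes "prime p" "0 < k" "k \<le> n"
  shows "multiplicity p k \<le> nat \<lfloor>log p n\<rfloor>"
proof -
  have "p ^ multiplicity p k \<le> n"
    using assms multiplicity_dvd[of p k] dvd_imp_le by (metis le_trans)
  then have "multiplicity p k \<le> log p n"
    using le_log_of_power[of p "multiplicity p k" n] prime_gt_1_nat[OF assms(1)]
    by (metis of_nat_1 of_nat_less_iff of_nat_power of_nat_le_iff)
  then show ?thesis by linarith
qed

lemma multiplicity_eq_card_prime_power_divisors:
  fixes p k :: nat
  assumes "prime p" "0 < k" "multiplicity p k \<le> L"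
  shows "multiplicity p k = card {b \<in> {1..L}. p ^ b dvd k}"
proof -
  have "{b \<in> {1..L}. p ^ b dvd k} = {1..multiplicity p k}"
    using assms prime_gt_1_nat[of p] by (auto simp: power_dvd_iff_le_multiplicity)
  then show ?thesis by simp
qed

lemma sum_over_multiples:
  fixes f :: "nat \<Rightarrow> 'a::comm_monoid_add"
  assumes "0 < d"
  shows "(\<Sum>k \<in> {k \<in> {1..n}. d dvd k}. f k) = (\<Sum>a = 1..n div d. f (a * d))"
proof -
  have "{k \<in> {1..n}. d dvd k} = (\<lambda>a. a * d) ` {1..n div d}"
    using assms by (auto simp: less_eq_div_iff_mult_less_eq image_iff mult.commute elim!: dvdE)
  then show ?thesis
    using assms by (simp add: sum.reindex inj_on_def)
qed

theorem lemma4p2: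
  fixes p n :: nat
  assumes "prime p" and "n \<ge> 1"
  shows "multiplicity p (farey_denom_prod n) =
    (\<Sum>b = 1..nat \<lfloor>log (real p) (real n)\<rfloor>. \<Sum>a = 1..n div p ^ b. totient (a * p ^ b))"
proof -
  define L where "L = nat \<lfloor>log p n\<rfloor>"
  have "multiplicity p (farey_denom_prod n) =
      (\<Sum>k = 1..n. totient k * card {b \<in> {1..L}. p ^ b dvd k})"
    unfolding multiplicity_farey_denom_prod[OF assms(1)] L_def
    using assms(1) multiplicity_le_nat_floor_log multiplicity_eq_card_prime_power_divisors
    by (intro sum.cong) auto
  also have "\<dots> = (\<Sum>k = 1..n. \<Sum>b = 1..L. if p ^ b dvd k then totient k else 0)"
    by (intro sum.cong) (simp_all add: sum.If_cases Int_def)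
  also have "\<dots> = (\<Sum>b = 1..L. \<Sum>k \<in> {k \<in> {1..n}. p ^ b dvd k}. totient k)"
    by (subst sum.swap) (rule sum.cong[OF refl], rule sum.inter_filter[symmetric], simp)
  also have "\<dots> = (\<Sum>b = 1..L. \<Sum>a = 1..n div p ^ b. totient (a * p ^ b))"
    using prime_gt_0_nat[OF assms(1)]
    by (intro sum.cong refl sum_over_multiples) simp
  finally show ?thesis unfolding L_def .
qed

end
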